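(* Let $G=(V,E)$ have $|V|=2$, let $N>3$, $\varepsilon=0$ and $s_0\in S_{nc}$. Then: (1) for every $\gamma\in(0,1)$, $\Gamma_N(G|s_0,\gamma,0)$ has at least one nonpositional trigger strategies profile; (2) $\Gamma_N(G|s_0,\gamma,0)$ has at least one positional trigger strategies profile if and only if $\gamma\in\left(0,\frac1{N-1}\right]$.
   Context: Setting. $G=(V,E)$ is a finite, simple, connected, undirected graph; $N\ge 3$ is an integer; $\gamma\in(0,1)$ and $\varepsilon\in[0,\frac1{N-1}]$ are parameters. There are $N$ tokens: cops $C_1,\dots,C_{N-1}$ (tokens $1,\dots,N-1$) and the robber $R$ (token $N$). A state is $s=(x^1,\dots,x^N,n)$ where $x^i\in V$ is the position of token $i$ and $n\in\{1,\dots,N\}$ is the token that moves next; $S^n$ denotes the set of states with token $n$ to move. A state is a capture state if $x^i=x^N$ for some $i\le N-1$; $S_{nc}$ is the set of noncapture states. In each turn exactly one token, the one to move, moves to a vertex of its closed neighbourhood (it may stay put); the order of moves is $C_1,C_2,\dots,C_{N-1},R,C_1,\dots$. Starting from an initial state $s_0\in S_{nc}$ at time $0$, the capture time is the first time $t$ at which a capture state occurs (infinite if never); after capture the game is over. Auxiliary games. For $m\in\{1,\dots,N\}$, $\Gamma_N^m(G|s_0,\gamma,\varepsilon)$ is the two-player zero-sum game in which player $P_m$ controls token $m$ and player $P_{-m}$ controls all other tokens, with the following payoff to $P_m$ ($P_{-m}$ receives its negative): $0$ if no capture ever occurs; if capture occurs at time $t$: for $m=N$, $-\gamma^t$; for $m\le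 N-1$, $\frac{1-\varepsilon}{K}\gamma^t$ if exactly $K\in\{1,\dots,N-2\}$ cops, including $C_m$, are on the robber's vertex, $\frac{\varepsilon}{N-K-1}\gamma^t$ if exactly $K\in\{1,\dots,N-2\}$ cops, not including $C_m$, are on the robber's vertex, and $\frac{\gamma^t}{N-1}$ if all $N-1$ cops are on the robber's vertex. $\Gamma^N_N$ is the modified cops-and-robber (CR) game. A pure positional strategy for token $n$ maps each state in $S^n\cap S_{nc}$ to an allowed next vertex. Each $\Gamma^m_N$ has optimal pure positional strategies (optimal from every initial state). For $m,n\in\{1,\dots,N\}$, $\phi^n_m$ denotes the strategy of token $n$ in a chosen pair of optimal pure positional strategies of $\Gamma^m_N$ (so $\phi^m_m$ is $P_m$'s optimal strategy and $(\phi^n_m)_{n\ne m}$ is $P_{-m}$'s). $\widehat\Sigma^n$ is the set of pure positional strategies of token $n$ that are components of optimal strategy pairs of $\Gamma^N_N$ (CR-optimal strategies). Trigger strategies. Given a choice of $(\phi^n_m)_{n,m}$, the trigger strategies profile $\bar\sigma=(\bar\sigma^1,\dots,\bar\sigma^N)$ of the $N$-player SCAR game $\Gamma_N(G|s_0,\gamma,\varepsilon)$ (same board and moves; player $n$ controls token $n$) is: token $n$, at current state $s$, plays $\phi^n_n(s)$ as long as every other player $m$ has followed $\phi^m_m$, and plays $\phi^n_m(s)$ from the moment a player $m\neq n$ deviates from $\phi^m_m$. Different choices of the optimal strategies give different trigger strategies profiles. $\bar\sigma$ is called positional if for all $n,m\in\{1,\dots,N\}$ there is $\widehat\sigma^n\in\widehat\Sigma^n$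 with $\phi^n_m(s)=\widehat\sigma^n(s)$ for every state $s\in S^n\cap S_{nc}$ reachable from $s_0$ by a finite sequence of legal moves passing only through noncapture states; otherwise $\bar\sigma$ is nonpositional. *)

theory Defs
  imports Complex_Main
begin

definition simple_graph :: "'v set \<Rightarrow> ('v \<Rightarrow> 'v \<Rightarrow> bool) \<Rightarrow> bool" where
  "simple_graph V E \<longleftrightarrow> finite V \<and> (\<forall>x y. E x y \<longrightarrow> x \<in> V \<and> y \<in> V)
     \<and> (\<forall>x y. E x y \<longrightarrow> E y x) \<and> (\<forall>x. \<not> E x x)"

definition graph_connected :: "'v set \<Rightarrow> ('v \<Rightarrow> 'v \<Rightarrow> bool) \<Rightarrow> bool" where
  "graph_connected V E \<longleftrightarrow> V \<noteq> {} \<and> (\<forall>x\<in>V. \<forall>y\<in>V. E\<^sup>*\<^sup>* x y)"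

definition nbhd :: "'v set \<Rightarrow> ('v \<Rightarrow> 'v \<Rightarrow> bool) \<Rightarrow> 'v \<Rightarrow> 'v set" where
  "nbhd V E x = {y \<in> V. y = x \<or> E x y}"

(* A state (xs, n): xs ! (i-1) is the position x^i of token i (i = 1..N),
   n is the token to move.  Tokens 1..N-1 are cops, token N is the robber. *)
type_synonym 'v state = "'v list \<times> nat"

definition pos :: "'v state \<Rightarrow> nat \<Rightarrow> 'v" where
  "pos s i = fst s ! (i - 1)"

definition states :: "'v set \<Rightarrow> nat \<Rightarrow> 'v state set" where
  "states V N = {(xs, n). length xs = N \<and> set xs \<subseteq> V \<and> n \<in> {1..N}}"

definition capture :: "nat \<Rightarrow> 'v state \<Rightarrow> bool" where
  "capture N s \<longleftrightarrow> (\<exists>i\<in>{1..N-1}. pos s i = pos s N)"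

definition S_nc :: "'v set \<Rightarrow> nat \<Rightarrow> 'v state set" where
  "S_nc V N = {s \<in> states V N. \<not> capture N s}"

definition next_tok :: "nat \<Rightarrow> nat \<Rightarrow> nat" where
  "next_tok N n = (if n = N then 1 else n + 1)"

definition move :: "nat \<Rightarrow> 'v state \<Rightarrow> 'v \<Rightarrow> 'v state" where
  "move N s v = ((fst s)[snd s - 1 := v], next_tok N (snd s))"

(* general (history dependent) pure strategy of token n: histories are
   nonempty lists of states, the last one being the current state *)
definition gstrategy :: "'v set \<Rightarrow> ('v \<Rightarrow> 'v \<Rightarrow> bool) \<Rightarrow> nat \<Rightarrow> nat
    \<Rightarrow> ('v state list \<Rightarrow> 'v) \<Rightarrow> bool" where
  "gstrategy V E N n \<tau> \<longleftrightarrow> (\<forall>h. h \<noteq> [] \<longrightarrow> last h \<in> S_nc V N \<longrightarrow> snd (last h) = n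
      \<longrightarrow> \<tau> h \<in> nbhd V E (pos (last h) n))"

(* pure positional strategy of token n: a map S^n \<inter> S_nc \<rightarrow> allowed vertices
   (values outside S^n \<inter> S_nc are irrelevant) *)
definition pstrategy :: "'v set \<Rightarrow> ('v \<Rightarrow> 'v \<Rightarrow> bool) \<Rightarrow> nat \<Rightarrow> nat
    \<Rightarrow> ('v state \<Rightarrow> 'v) \<Rightarrow> bool" where
  "pstrategy V E N n \<sigma> \<longleftrightarrow> (\<forall>s \<in> S_nc V N. snd s = n \<longrightarrow> \<sigma> s \<in> nbhd V E (pos s n))"

definition as_general :: "('v state \<Rightarrow> 'v) \<Rightarrow> ('v state list \<Rightarrow> 'v)" where
  "as_general \<sigma> = (\<lambda>h. \<sigma> (last h))"

fun hist :: "nat \<Rightarrow> (nat \<Rightarrow> 'v state list \<Rightarrow> 'v) \<Rightarrow> 'v state \<Rightarrow> nat \<Rightarrow> 'v state list" where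
  "hist N \<rho> s0 0 = [s0]"
| "hist N \<rho> s0 (Suc t) = (let h = hist N \<rho> s0 t; s = last h in h @ [move N s (\<rho> (snd s) h)])"

definition play :: "nat \<Rightarrow> (nat \<Rightarrow> 'v state list \<Rightarrow> 'v) \<Rightarrow> 'v state \<Rightarrow> nat \<Rightarrow> 'v state" where
  "play N \<rho> s0 t = last (hist N \<rho> s0 t)"

definition reward :: "nat \<Rightarrow> real \<Rightarrow> nat \<Rightarrow> 'v state \<Rightarrow> real" where
  "reward N \<epsilon> m s =
     (if m = N then -1
      else (let K = card {i \<in> {1..N-1}. pos s i = pos s N} in
            if K = N - 1 then 1 / (real N - 1)
            else if pos s m = pos s N then (1 - \<epsilon>) / real K
            else \<epsilon> / (real N - real K - 1)))"

definition payoff :: "nat \<Rightarrow> real \<Rightarrow> real \<Rightarrow> nat \<Rightarrow> (nat \<Rightarrow> 'v state list \<Rightarrow> 'v)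
    \<Rightarrow> 'v state \<Rightarrow> real" where
  "payoff N \<gamma> \<epsilon> m \<rho> s0 =
     (if \<exists>t. capture N (play N \<rho> s0 t)
      then (let T = (LEAST t. capture N (play N \<rho> s0 t))
            in reward N \<epsilon> m (play N \<rho> s0 T) * \<gamma> ^ T)
      else 0)"

(* \<sigma> (a profile of pure positional strategies, \<sigma> n for token n) is a pair of
   optimal strategies of \<Gamma>^m_N (P_m: token m, P_{-m}: the other tokens),
   optimal from every initial noncapture state, against arbitrary
   (history dependent) deviations *)
definition opt_pair :: "'v set \<Rightarrow> ('v \<Rightarrow> 'v \<Rightarrow> bool) \<Rightarrow> nat \<Rightarrow> real \<Rightarrow> real \<Rightarrow> nat
    \<Rightarrow> (nat \<Rightarrow> 'v state \<Rightarrow> 'v) \<Rightarrow> bool" where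
  "opt_pair V E N \<gamma> \<epsilon> m \<sigma> \<longleftrightarrow>
     (\<forall>n\<in>{1..N}. pstrategy V E N n (\<sigma> n)) \<and>
     (\<forall>s0 \<in> S_nc V N.
        (\<forall>\<tau>. gstrategy V E N m \<tau> \<longrightarrow>
           payoff N \<gamma> \<epsilon> m ((\<lambda>n. as_general (\<sigma> n))(m := \<tau>)) s0
             \<le> payoff N \<gamma> \<epsilon> m (\<lambda>n. as_general (\<sigma> n)) s0) \<and>
        (\<forall>\<rho>. (\<forall>n\<in>{1..N} - {m}. gstrategy V E N n (\<rho> n)) \<longrightarrow>
           payoff N \<gamma> \<epsilon> m (\<lambda>n. as_general (\<sigma> n)) s0
             \<le> payoff N \<gamma> \<epsilon> m (\<rho>(m := as_general (\<sigma> m))) s0))"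

definition CR_opt :: "'v set \<Rightarrow> ('v \<Rightarrow> 'v \<Rightarrow> bool) \<Rightarrow> nat \<Rightarrow> real \<Rightarrow> real \<Rightarrow> nat
    \<Rightarrow> ('v state \<Rightarrow> 'v) set" where
  "CR_opt V E N \<gamma> \<epsilon> n = {\<sigma> n | \<sigma>. opt_pair V E N \<gamma> \<epsilon> N \<sigma>}"

definition step_rel :: "'v set \<Rightarrow> ('v \<Rightarrow> 'v \<Rightarrow> bool) \<Rightarrow> nat \<Rightarrow> 'v state \<Rightarrow> 'v state \<Rightarrow> bool" where
  "step_rel V E N s s' \<longleftrightarrow> s \<in> S_nc V N \<and> (\<exists>v \<in> nbhd V E (pos s (snd s)). s' = move N s v)"

(* s reachable from s0 by finitely many legal moves through noncapture states
   (s itself is additionally required to be noncapture where used) *)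
definition reachable :: "'v set \<Rightarrow> ('v \<Rightarrow> 'v \<Rightarrow> bool) \<Rightarrow> nat \<Rightarrow> 'v state \<Rightarrow> 'v state \<Rightarrow> bool" where
  "reachable V E N s0 s \<longleftrightarrow> (step_rel V E N)\<^sup>*\<^sup>* s0 s"

(* a choice \<phi> n m = \<phi>^n_m of optimal pure positional strategies: for every m,
   (\<phi>^n_m)_n is an optimal pair of \<Gamma>^m_N.  Each such choice determines a
   trigger strategies profile of \<Gamma>_N(G|s0,\<gamma>,\<epsilon>). *)
definition trigger_choice :: "'v set \<Rightarrow> ('v \<Rightarrow> 'v \<Rightarrow> bool) \<Rightarrow> nat \<Rightarrow> real \<Rightarrow> real
    \<Rightarrow> (nat \<Rightarrow> nat \<Rightarrow> 'v state \<Rightarrow> 'v) \<Rightarrow> bool" where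
  "trigger_choice V E N \<gamma> \<epsilon> \<phi> \<longleftrightarrow> (\<forall>m\<in>{1..N}. opt_pair V E N \<gamma> \<epsilon> m (\<lambda>n. \<phi> n m))"

definition positional_trigger :: "'v set \<Rightarrow> ('v \<Rightarrow> 'v \<Rightarrow> bool) \<Rightarrow> nat \<Rightarrow> real \<Rightarrow> real
    \<Rightarrow> 'v state \<Rightarrow> (nat \<Rightarrow> nat \<Rightarrow> 'v state \<Rightarrow> 'v) \<Rightarrow> bool" where
  "positional_trigger V E N \<gamma> \<epsilon> s0 \<phi> \<longleftrightarrow>
     (\<forall>n\<in>{1..N}. \<forall>m\<in>{1..N}. \<exists>\<sigma>h \<in> CR_opt V E N \<gamma> \<epsilon> n.
        \<forall>s. s \<in> S_nc V N \<and> snd s = n \<and> reachable V E N s0 s \<longrightarrow> \<phi> n m s = \<sigma>h s)"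

end

theory Submission
  imports Defs
begin

text \<open>On two vertices every noncapture state has all cops on one vertex and the robber on the
  other, so each move either passes or ends the game: a cop that steps over captures alone, a
  robber that steps over is caught by all cops. A play is thus a run of passes followed by one
  such jump, and every payoff is determined by who jumps first and when.

  Every CR-optimal strategy makes a cop capture at once and the robber stay put. In the game of
  cop 1, when the robber is to move, its surrender gives cop 1 \<open>\<gamma>/(N-1)\<close>, while waiting gives
  cop 1 the \<open>\<gamma>\<^sup>2\<close> of capturing alone. So the opponents of cop 1 can play CR-optimally
  exactly when \<open>\<gamma>\<^sup>2 \<le> \<gamma>/(N-1)\<close>, i.e. \<open>\<gamma> \<le> 1/(N-1)\<close>; beyond that they must make the
  robber surrender, and no trigger profile is positional. For every \<open>\<gamma>\<close> a nonpositional
  profile comes from the game of cop 3, whose opponents may let cop 1 wait and cop 2 capture.\<close>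

section \<open>Plays and payoffs\<close>

lemma play_0 [simp]: "play N \<rho> s0 0 = s0"
  by (simp add: play_def)

lemma play_Suc:
  "play N \<rho> s0 (Suc t) = move N (play N \<rho> s0 t) (\<rho> (snd (play N \<rho> s0 t)) (hist N \<rho> s0 t))"
  by (simp add: play_def Let_def)

lemma as_general_hist [simp]: "as_general \<sigma> (hist N \<rho> s0 t) = \<sigma> (play N \<rho> s0 t)"
  by (simp add: as_general_def play_def)

lemma hist_not_Nil: "hist N \<rho> s0 t \<noteq> []"
  by (cases t) (simp_all add: Let_def)

lemma payoff_first_capture:
  assumes "\<forall>t'\<le>t. \<not> capture N (play N \<rho> s0 t')" "capture N (play N \<rho> s0 (Suc t))"
  shows "payoff N \<gamma> \<epsilon> m \<rho> s0 = reward N \<epsilon> m (play N \<rho> s0 (Suc t)) * \<gamma> ^ Suc t"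
proof -
  have "(LEAST t. capture N (play N \<rho> s0 t)) = Suc t"
    by (rule Least_equality) (use assms not_less_eq_eq in auto)
  then show ?thesis
    using assms unfolding payoff_def by auto
qed

lemma payoff_zero_or_later_capture:
  assumes "\<forall>t'\<le>t. \<not> capture N (play N \<rho> s0 t')"
  obtains "payoff N \<gamma> \<epsilon> m \<rho> s0 = 0"
    | T where "t < T" "payoff N \<gamma> \<epsilon> m \<rho> s0 = reward N \<epsilon> m (play N \<rho> s0 T) * \<gamma> ^ T"
proof (cases "\<exists>t. capture N (play N \<rho> s0 t)")
  case True
  define T where "T = (LEAST t. capture N (play N \<rho> s0 t))"
  have "capture N (play N \<rho> s0 T)"
    using True LeastI_ex unfolding T_def by metis
  then have "t < T"
    using assms not_le by blast
  moreover have "payoff N \<gamma> \<epsilon> m \<rho> s0 = reward N \<epsilon> m (play N \<rho> s0 T) * \<gamma> ^ T"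
    using True unfolding payoff_def T_def Let_def by simp
  ultimately show ?thesis
    using that by blast
qed (use that in \<open>simp add: payoff_def\<close>)

lemma reward_cop_bounds:
  assumes "1 < N" "m < N"
  shows "0 \<le> reward N 0 m s \<and> reward N 0 m s \<le> 1"
proof -
  have "0 \<le> 1 / real K \<and> 1 / real K \<le> (1::real)" for K :: nat
    by (cases "K = 0") auto
  moreover have "0 \<le> 1 / (real N - 1) \<and> 1 / (real N - 1) \<le> (1::real)"
    using assms by auto
  ultimately show ?thesis
    using assms unfolding reward_def Let_def by auto
qed

lemma payoff_bounds:
  assumes "\<forall>t'\<le>t. \<not> capture N (play N \<rho> s0 t')" "0 < \<gamma>" "\<gamma> < 1" "1 < N"
  shows payoff_cop_bounds:
      "m < N \<Longrightarrow> 0 \<le> payoff N \<gamma> 0 m \<rho> s0 \<and> payoff N \<gamma> 0 m \<rho> s0 \<le> \<gamma> ^ Suc t"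
    and payoff_robber_bounds:
      "- (\<gamma> ^ Suc t) \<le> payoff N \<gamma> 0 N \<rho> s0 \<and> payoff N \<gamma> 0 N \<rho> s0 \<le> 0"
proof -
  have decay: "\<gamma> ^ T \<le> \<gamma> ^ Suc t" if "t < T" for T
    using that assms(2,3) power_decreasing[of "Suc t" T \<gamma>] by simp
  show "m < N \<Longrightarrow> 0 \<le> payoff N \<gamma> 0 m \<rho> s0 \<and> payoff N \<gamma> 0 m \<rho> s0 \<le> \<gamma> ^ Suc t"
  proof (cases rule: payoff_zero_or_later_capture[OF assms(1), of \<gamma> 0 m])
    case (2 T)
    assume "m < N"
    then have r: "0 \<le> reward N 0 m (play N \<rho> s0 T) \<and> reward N 0 m (play N \<rho> s0 T) \<le> 1"
      using reward_cop_bounds assms(4) by blast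
    have "reward N 0 m (play N \<rho> s0 T) * \<gamma> ^ T \<le> 1 * \<gamma> ^ T"
      using r assms(2) by (intro mult_right_mono) auto
    moreover have "0 \<le> reward N 0 m (play N \<rho> s0 T) * \<gamma> ^ T"
      using r assms(2) by simp
    ultimately show ?thesis
      using 2 decay[OF 2(1)] by linarith
  qed (use assms(2) in simp)
  show "- (\<gamma> ^ Suc t) \<le> payoff N \<gamma> 0 N \<rho> s0 \<and> payoff N \<gamma> 0 N \<rho> s0 \<le> 0"
  proof (cases rule: payoff_zero_or_later_capture[OF assms(1), of \<gamma> 0 N])
    case (2 T)
    then show ?thesis
      using decay[OF 2(1)] assms(2) by (simp add: reward_def)
  qed (use assms(2) in simp)
qed

lemma S_nc_D:
  assumes "(xs, n0) \<in> S_nc V N"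
  shows "length xs = N" "n0 \<in> {1..N}" "\<And>j. j < N \<Longrightarrow> xs ! j \<in> V"
    "\<And>i. 1 \<le> i \<Longrightarrow> i < N \<Longrightarrow> xs ! (i - 1) \<noteq> xs ! (N - 1)"
proof -
  have xs: "length xs = N" "set xs \<subseteq> V" and "n0 \<in> {1..N}" "\<not> capture N (xs, n0)"
    using assms unfolding S_nc_def states_def by auto
  then show "length xs = N" "n0 \<in> {1..N}"
    by simp_all
  show "xs ! j \<in> V" if "j < N" for j
    using xs that nth_mem by blast
  show "xs ! (i - 1) \<noteq> xs ! (N - 1)" if "1 \<le> i" "i < N" for i
    using \<open>\<not> capture N (xs, n0)\<close> that unfolding capture_def pos_def by auto
qed

lemma S_nc_turn: "(xs, n0) \<in> S_nc V N \<Longrightarrow> n \<in> {1..N} \<Longrightarrow> (xs, n) \<in> S_nc V N"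
  unfolding S_nc_def states_def capture_def pos_def by auto

lemma next_tok_range: "n \<in> {1..N} \<Longrightarrow> next_tok N n \<in> {1..N}"
  unfolding next_tok_def by auto

definition frozen :: "nat \<Rightarrow> (nat \<Rightarrow> 'v state list \<Rightarrow> 'v) \<Rightarrow> 'v state \<Rightarrow> 'v list \<Rightarrow> nat \<Rightarrow> nat \<Rightarrow> bool"
  where "frozen N \<rho> s0 xs t n \<longleftrightarrow>
    (\<forall>t'\<le>t. fst (play N \<rho> s0 t') = xs) \<and> play N \<rho> s0 t = (xs, n) \<and> n \<in> {1..N}"

lemma frozen_0: "(xs, n0) \<in> S_nc V N \<Longrightarrow> frozen N \<rho> (xs, n0) xs 0 n0"
  using S_nc_D(2) unfolding frozen_def by auto

lemma frozen_play: "frozen N \<rho> s0 xs t n \<Longrightarrow> play N \<rho> s0 t = (xs, n)"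
  unfolding frozen_def by simp

lemma frozen_Suc:
  assumes "frozen N \<rho> s0 xs t n" "\<rho> n (hist N \<rho> s0 t) = xs ! (n - 1)"
  shows "frozen N \<rho> s0 xs (Suc t) (next_tok N n)"
proof -
  have "play N \<rho> s0 (Suc t) = (xs, next_tok N n)"
    using assms unfolding play_Suc frozen_def move_def by simp
  then show ?thesis
    using assms next_tok_range unfolding frozen_def by (metis fst_conv le_Suc_eq)
qed

lemma frozen_no_capture:
  "(xs, n0) \<in> S_nc V N \<Longrightarrow> frozen N \<rho> s0 xs t n \<Longrightarrow> \<forall>t'\<le>t. \<not> capture N (play N \<rho> s0 t')"
  unfolding frozen_def S_nc_def capture_def pos_def by auto

lemma frozen_move_allowed:
  assumes s: "(xs, n0) \<in> S_nc V N" and fr: "frozen N \<rho> s0 xs t n" and \<tau>: "gstrategy V E N n \<tau>"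
  shows "\<tau> (hist N \<rho> s0 t) \<in> nbhd V E (xs ! (n - 1))"
proof -
  have "last (hist N \<rho> s0 t) = (xs, n)"
    using frozen_play[OF fr] by (simp add: play_def)
  moreover have "(xs, n) \<in> S_nc V N"
    using S_nc_turn[OF s] fr unfolding frozen_def by simp
  ultimately have "\<tau> (hist N \<rho> s0 t) \<in> nbhd V E (pos (xs, n) n)"
    using \<tau> hist_not_Nil unfolding gstrategy_def by (metis snd_conv)
  then show ?thesis
    by (simp add: pos_def)
qed

section \<open>Jumps on two vertices\<close>

text \<open>The reward of player \<open>m\<close> when token \<open>n\<close> is the first to leave its vertex.\<close>
definition jump_reward :: "nat \<Rightarrow> nat \<Rightarrow> nat \<Rightarrow> real" where
  "jump_reward N m n =
    (if m = N then -1 else if n = N then 1 / (real N - 1) else if m = n then 1 else 0)"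

locale two_vertex_game =
  fixes V :: "'v set" and E :: "'v \<Rightarrow> 'v \<Rightarrow> bool" and N :: nat and a b :: 'v
  assumes V: "V = {a, b}" and E_ab: "E a b" and E_ba: "E b a" and N_gt_2: "2 < N"
begin

lemma nbhd_eq_V: "x \<in> V \<Longrightarrow> nbhd V E x = V"
  using V E_ab E_ba unfolding nbhd_def by auto

lemma other_vertex_unique: "x \<in> V \<Longrightarrow> y \<in> V \<Longrightarrow> z \<in> V \<Longrightarrow> x \<noteq> z \<Longrightarrow> y \<noteq> z \<Longrightarrow> x = y"
  using V by auto

lemma robber_jump_capture:
  assumes s: "(xs, n0) \<in> S_nc V N" and v: "v \<in> V" "v \<noteq> xs ! (N - 1)" and m: "m \<in> {1..N}"
  shows "capture N (xs[N - 1 := v], k) \<and> reward N 0 m (xs[N - 1 := v], k) = jump_reward N m N"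
proof -
  let ?s = "(xs[N - 1 := v], k)"
  note D = S_nc_D[OF s]
  have "pos ?s i = v" if "i \<in> {1..N}" for i
  proof (cases "i = N")
    case False
    then have "xs ! (i - 1) \<in> V" "xs ! (N - 1) \<in> V" "xs ! (i - 1) \<noteq> xs ! (N - 1)"
      using D(3,4) that by auto
    then show ?thesis
      using other_vertex_unique[of "xs ! (i - 1)" v "xs ! (N - 1)"] v False that
      by (auto simp: pos_def)
  qed (use D(1) N_gt_2 in \<open>simp add: pos_def\<close>)
  then have all: "{i \<in> {1..N-1}. pos ?s i = pos ?s N} = {1..N-1}"
    using N_gt_2 by auto
  have "reward N 0 m ?s = jump_reward N m N"
    unfolding reward_def jump_reward_def Let_def all by simp
  moreover have "1 \<in> {i \<in> {1..N-1}. pos ?s i = pos ?s N}"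
    unfolding all using N_gt_2 by simp
  then have "capture N ?s"
    unfolding capture_def by blast
  ultimately show ?thesis
    by simp
qed

lemma cop_jump_catchers:
  assumes s: "(xs, n0) \<in> S_nc V N" and n: "1 \<le> n" "n < N"
    and v: "v \<in> V" "v \<noteq> xs ! (n - 1)"
  shows "{i \<in> {1..N-1}. pos (xs[n - 1 := v], k) i = pos (xs[n - 1 := v], k) N} = {n}"
proof -
  let ?s = "(xs[n - 1 := v], k)"
  note D = S_nc_D[OF s]
  have "xs ! (n - 1) \<in> V" "xs ! (N - 1) \<in> V" "xs ! (n - 1) \<noteq> xs ! (N - 1)"
    using D(3,4) n by auto
  then have "v = xs ! (N - 1)"
    using other_vertex_unique[of v "xs ! (N - 1)" "xs ! (n - 1)"] v by metis
  then have robber: "pos ?s N = xs ! (N - 1)" and mover: "pos ?s n = xs ! (N - 1)"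
    using n D(1) by (auto simp: pos_def)
  have "pos ?s i \<noteq> pos ?s N" if "i \<in> {1..N-1}" "i \<noteq> n" for i
  proof -
    have "i - 1 \<noteq> n - 1" "1 \<le> i" "i < N"
      using that n N_gt_2 by auto
    then show ?thesis
      using D(4)[of i] robber by (simp add: pos_def)
  qed
  moreover have "n \<in> {1..N-1}" "pos ?s n = pos ?s N"
    using robber mover n by auto
  ultimately show ?thesis
    by blast
qed

lemma cop_jump_capture:
  assumes s: "(xs, n0) \<in> S_nc V N" and n: "1 \<le> n" "n < N"
    and v: "v \<in> V" "v \<noteq> xs ! (n - 1)" and m: "m \<in> {1..N}"
  shows "capture N (xs[n - 1 := v], k) \<and> reward N 0 m (xs[n - 1 := v], k) = jump_reward N m n"
proof -
  let ?s = "(xs[n - 1 := v], k)"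
  have catchers: "{i \<in> {1..N-1}. pos ?s i = pos ?s N} = {n}"
    by (rule cop_jump_catchers[OF s n v])
  have "reward N 0 m ?s = jump_reward N m n"
  proof (cases "m = N")
    case False
    then have "m \<in> {1..N-1}"
      using m by auto
    then have "pos ?s m = pos ?s N \<longleftrightarrow> m = n"
      using catchers by blast
    moreover have "N - 1 \<noteq> 1"
      using N_gt_2 by simp
    ultimately show ?thesis
      using False n catchers unfolding reward_def jump_reward_def Let_def by simp
  qed (simp add: reward_def jump_reward_def)
  moreover have "capture N ?s"
    using catchers unfolding capture_def by blast
  ultimately show ?thesis
    by simp
qed

lemma payoff_jump:
  assumes s: "(xs, n0) \<in> S_nc V N" and fr: "frozen N \<rho> s0 xs t n"
    and v: "\<rho> n (hist N \<rho> s0 t) \<in> V" "\<rho> n (hist N \<rho> s0 t) \<noteq> xs ! (n - 1)"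
    and m: "m \<in> {1..N}"
  shows "payoff N \<gamma> 0 m \<rho> s0 = jump_reward N m n * \<gamma> ^ Suc t"
proof -
  have "n \<in> {1..N}"
    using fr unfolding frozen_def by simp
  then have "capture N (play N \<rho> s0 (Suc t))
      \<and> reward N 0 m (play N \<rho> s0 (Suc t)) = jump_reward N m n"
    using robber_jump_capture[OF s _ _ m] cop_jump_capture[OF s _ _ v m] v frozen_play[OF fr]
    by (cases "n = N") (simp_all add: play_Suc move_def)
  then show ?thesis
    using payoff_first_capture[OF frozen_no_capture[OF s fr]] by simp
qed

lemma frozen_step_cases:
  assumes s: "(xs, n0) \<in> S_nc V N" and fr: "frozen N \<rho> s0 xs t n"
    and "gstrategy V E N n (\<rho> n)" and "m \<in> {1..N}"
  obtains "frozen N \<rho> s0 xs (Suc t) (next_tok N n)"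
    | "payoff N \<gamma> 0 m \<rho> s0 = jump_reward N m n * \<gamma> ^ Suc t"
proof -
  have "\<rho> n (hist N \<rho> s0 t) \<in> V"
    using frozen_move_allowed[OF s fr assms(3)] unfolding nbhd_def by simp
  then show ?thesis
    using that frozen_Suc[OF fr] payoff_jump[OF s fr _ _ assms(4)] by blast
qed

end

section \<open>Optimal pairs\<close>

lemma gstrategy_as_general: "pstrategy V E N n \<sigma> \<Longrightarrow> gstrategy V E N n (as_general \<sigma>)"
  unfolding pstrategy_def gstrategy_def as_general_def by auto

lemma opt_pairI:
  assumes "\<And>n. n \<in> {1..N} \<Longrightarrow> pstrategy V E N n (\<sigma> n)"
    and "\<And>xs n0 \<tau>. (xs, n0) \<in> S_nc V N \<Longrightarrow> gstrategy V E N m \<tau> \<Longrightarrow>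
      payoff N \<gamma> \<epsilon> m ((\<lambda>n. as_general (\<sigma> n))(m := \<tau>)) (xs, n0)
        \<le> payoff N \<gamma> \<epsilon> m (\<lambda>n. as_general (\<sigma> n)) (xs, n0)"
    and "\<And>xs n0 \<rho>. (xs, n0) \<in> S_nc V N \<Longrightarrow> (\<forall>n\<in>{1..N} - {m}. gstrategy V E N n (\<rho> n)) \<Longrightarrow>
      payoff N \<gamma> \<epsilon> m (\<lambda>n. as_general (\<sigma> n)) (xs, n0)
        \<le> payoff N \<gamma> \<epsilon> m (\<rho>(m := as_general (\<sigma> m))) (xs, n0)"
  shows "opt_pair V E N \<gamma> \<epsilon> m \<sigma>"
  unfolding opt_pair_def using assms by (metis surj_pair)

lemma opt_pairD:
  assumes "opt_pair V E N \<gamma> \<epsilon> m \<sigma>" and "s0 \<in> S_nc V N"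
  shows opt_pair_pstrategy: "n \<in> {1..N} \<Longrightarrow> pstrategy V E N n (\<sigma> n)"
    and opt_pair_player: "gstrategy V E N m \<tau> \<Longrightarrow>
      payoff N \<gamma> \<epsilon> m ((\<lambda>n. as_general (\<sigma> n))(m := \<tau>)) s0
        \<le> payoff N \<gamma> \<epsilon> m (\<lambda>n. as_general (\<sigma> n)) s0"
    and opt_pair_opponents: "\<forall>n\<in>{1..N} - {m}. gstrategy V E N n (\<rho> n) \<Longrightarrow>
      payoff N \<gamma> \<epsilon> m (\<lambda>n. as_general (\<sigma> n)) s0
        \<le> payoff N \<gamma> \<epsilon> m (\<rho>(m := as_general (\<sigma> m))) s0"
  using assms unfolding opt_pair_def by blast+

text \<open>Played by the robber, \<open>chase\<close> means staying put.\<close>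
definition chase :: "nat \<Rightarrow> 'v state \<Rightarrow> 'v" where
  "chase N s = pos s N"

definition surrender :: "nat \<Rightarrow> nat \<Rightarrow> 'v state \<Rightarrow> 'v" where
  "surrender N n = (if n = N then (\<lambda>s. pos s 1) else chase N)"

definition cop1_waits :: "nat \<Rightarrow> nat \<Rightarrow> 'v state \<Rightarrow> 'v" where
  "cop1_waits N n = (if n = 1 then (\<lambda>s. pos s 1) else chase N)"

context two_vertex_game
begin

lemma pstrategy_of_token_positions: "(\<And>s. \<exists>k\<in>{1..N}. \<sigma> s = pos s k) \<Longrightarrow> pstrategy V E N n \<sigma>"
  unfolding pstrategy_def
proof (intro ballI impI)
  fix s assume s: "s \<in> S_nc V N" "snd s = n" and "\<And>s. \<exists>k\<in>{1..N}. \<sigma> s = pos s k"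
  then obtain k where "k \<in> {1..N}" "\<sigma> s = pos s k"
    by blast
  moreover have "pos s i \<in> V" if "i \<in> {1..N}" for i
    using s(1) that unfolding S_nc_def states_def pos_def by (cases s) auto
  moreover have "n \<in> {1..N}"
    using s unfolding S_nc_def states_def by auto
  ultimately show "\<sigma> s \<in> nbhd V E (pos s n)"
    using nbhd_eq_V by auto
qed

lemma pstrategy_chase: "pstrategy V E N n (chase N)"
  by (rule pstrategy_of_token_positions) (use N_gt_2 in \<open>auto simp: chase_def\<close>)

lemma pstrategy_surrender: "pstrategy V E N n (surrender N n)"
  by (rule pstrategy_of_token_positions) (use N_gt_2 in \<open>auto simp: surrender_def chase_def\<close>)

lemma pstrategy_cop1_waits: "pstrategy V E N n (cop1_waits N n)"
  by (rule pstrategy_of_token_positions) (use N_gt_2 in \<open>auto simp: cop1_waits_def chase_def\<close>)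

lemma payoff_chasing_cop:
  assumes s: "(xs, n0) \<in> S_nc V N" and fr: "frozen N \<rho> s0 xs t n" and n: "n < N"
    and chase: "\<rho> n = as_general (chase N)" and m: "m \<in> {1..N}"
  shows "payoff N \<gamma> 0 m \<rho> s0 = jump_reward N m n * \<gamma> ^ Suc t"
proof (rule payoff_jump[OF s fr _ _ m])
  have "1 \<le> n"
    using fr unfolding frozen_def by simp
  then have "xs ! (N - 1) \<in> V" "xs ! (N - 1) \<noteq> xs ! (n - 1)"
    using S_nc_D(3)[OF s, of "N - 1"] S_nc_D(4)[OF s, of n] n by auto
  then show "\<rho> n (hist N \<rho> s0 t) \<in> V" "\<rho> n (hist N \<rho> s0 t) \<noteq> xs ! (n - 1)"
    using chase frozen_play[OF fr] by (auto simp: chase_def pos_def)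
qed

lemma payoff_chasing_first:
  assumes "(xs, n0) \<in> S_nc V N" "n0 < N" "\<rho> n0 = as_general (chase N)" "m \<in> {1..N}"
  shows "payoff N \<gamma> 0 m \<rho> (xs, n0) = jump_reward N m n0 * \<gamma>"
  using payoff_chasing_cop[OF assms(1) frozen_0[OF assms(1), of \<rho>] assms(2-4)] by simp

lemma frozen_chasing_robber:
  "frozen N \<rho> s0 xs t N \<Longrightarrow> \<rho> N = as_general (chase N) \<Longrightarrow> frozen N \<rho> s0 xs (Suc t) 1"
  using frozen_Suc[of N \<rho> s0 xs t N] frozen_play by (fastforce simp: chase_def pos_def next_tok_def)

lemma payoff_chase:
  assumes s: "(xs, n0) \<in> S_nc V N" and m: "m \<in> {1..N}"
  shows "payoff N \<gamma> 0 m (\<lambda>_. as_general (chase N)) (xs, n0)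
    = (if n0 = N then jump_reward N m 1 * \<gamma> ^ 2 else jump_reward N m n0 * \<gamma>)"
proof -
  have fr: "frozen N (\<lambda>_. as_general (chase N)) (xs, n0) xs 0 n0"
    by (rule frozen_0[OF s])
  show ?thesis
  proof (cases "n0 = N")
    case True
    then have "frozen N (\<lambda>_. as_general (chase N)) (xs, n0) xs 1 1"
      using frozen_chasing_robber[of _ "(xs, n0)" xs 0] fr by simp
    then show ?thesis
      using payoff_chasing_cop[OF s _ _ _ m] True N_gt_2 by (simp add: numeral_2_eq_2)
  next
    case False
    then show ?thesis
      using payoff_chasing_cop[OF s fr _ _ m] S_nc_D(2)[OF s] by simp
  qed
qed

lemma payoff_robber_first:
  assumes s: "(xs, N) \<in> S_nc V N" and cop1: "\<rho> 1 = as_general (chase N)"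
    and robber: "gstrategy V E N N (\<rho> N)" and m: "m \<in> {1..N}"
  shows "payoff N \<gamma> 0 m \<rho> (xs, N) \<in> {jump_reward N m 1 * \<gamma> ^ 2, jump_reward N m N * \<gamma>}"
proof -
  consider "frozen N \<rho> (xs, N) xs 1 1" | "payoff N \<gamma> 0 m \<rho> (xs, N) = jump_reward N m N * \<gamma>"
    using frozen_step_cases[OF s frozen_0[OF s, of \<rho>] robber m] by (auto simp: next_tok_def)
  then show ?thesis
  proof cases
    case 1
    then show ?thesis
      using payoff_chasing_cop[OF s 1 _ cop1 m] N_gt_2 by (simp add: numeral_2_eq_2)
  qed simp
qed

lemma chase_cop_deviation:
  assumes s: "(xs, n0) \<in> S_nc V N" and m: "1 \<le> m" "m < N" and g: "0 < \<gamma>" "\<gamma> < 1"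
  shows "payoff N \<gamma> 0 m ((\<lambda>_. as_general (chase N))(m := \<tau>)) (xs, n0)
    \<le> payoff N \<gamma> 0 m (\<lambda>_. as_general (chase N)) (xs, n0)"
proof -
  define \<rho> where "\<rho> = (\<lambda>_. as_general (chase N))(m := \<tau>)"
  have fr: "frozen N \<rho> (xs, n0) xs 0 n0"
    by (rule frozen_0[OF s])
  have mN: "m \<in> {1..N}"
    using m by simp
  consider (robber_turn) "n0 = N" | (cop_turn) "n0 < N"
    using S_nc_D(2)[OF s] by fastforce
  then show ?thesis
  proof cases
    case robber_turn
    then have fr1: "frozen N \<rho> (xs, n0) xs 1 1"
      using frozen_chasing_robber[of \<rho> "(xs, n0)" xs 0] fr m by (simp add: \<rho>_def)
    then have "payoff N \<gamma> 0 m \<rho> (xs, n0) \<le> jump_reward N m 1 * \<gamma> ^ 2"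
      using payoff_cop_bounds[OF frozen_no_capture[OF s fr1] g, of m]
        payoff_chasing_cop[OF s fr1 _ _ mN] m N_gt_2
      by (cases "m = 1") (simp_all add: \<rho>_def jump_reward_def numeral_2_eq_2)
    then show ?thesis
      using payoff_chase[OF s mN] robber_turn by (simp add: \<rho>_def)
  next
    case cop_turn
    then have "payoff N \<gamma> 0 m \<rho> (xs, n0) \<le> jump_reward N m n0 * \<gamma>"
      using payoff_cop_bounds[OF frozen_no_capture[OF s fr] g, of m]
        payoff_chasing_first[OF s cop_turn _ mN] m
      by (cases "n0 = m") (simp_all add: \<rho>_def jump_reward_def)
    then show ?thesis
      using payoff_chase[OF s mN] cop_turn by (simp add: \<rho>_def)
  qed
qed

lemma chase_cop_opponents:
  assumes s: "(xs, n0) \<in> S_nc V N" and m: "1 \<le> m" "m < N" and g: "0 < \<gamma>" "\<gamma> < 1"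
    and \<gamma>_le: "m = 1 \<longrightarrow> \<gamma> \<le> 1 / (real N - 1)"
    and chase: "\<rho> m = as_general (chase N)" and robber: "gstrategy V E N N (\<rho> N)"
  shows "payoff N \<gamma> 0 m (\<lambda>_. as_general (chase N)) (xs, n0) \<le> payoff N \<gamma> 0 m \<rho> (xs, n0)"
proof -
  have mN: "m \<in> {1..N}"
    using m by simp
  consider (own_turn) "n0 = m" | (cop1_after_robber) "n0 = N" "m = 1"
    | (other) "n0 \<noteq> m" "\<not> (n0 = N \<and> m = 1)"
    by blast
  then show ?thesis
  proof cases
    case own_turn
    then show ?thesis
      using payoff_chasing_first[OF s _ _ mN] chase m by simp
  next
    case cop1_after_robber
    then have sN: "(xs, N) \<in> S_nc V N"
      using s by simp
    have "payoff N \<gamma> 0 m \<rho> (xs, N) \<in> {\<gamma> * \<gamma>, \<gamma> * (1 / (real N - 1))}"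
      using payoff_robber_first[where \<rho> = \<rho> and \<gamma> = \<gamma>, OF sN _ robber mN] chase
        cop1_after_robber N_gt_2
      by (simp add: jump_reward_def power2_eq_square)
    moreover have "\<gamma> * \<gamma> \<le> \<gamma> * (1 / (real N - 1))"
      using \<gamma>_le cop1_after_robber g by (intro mult_left_mono) auto
    moreover have "payoff N \<gamma> 0 m (\<lambda>_. as_general (chase N)) (xs, N) = \<gamma> * \<gamma>"
      using payoff_chase[OF sN mN] cop1_after_robber N_gt_2
      by (simp add: jump_reward_def power2_eq_square)
    ultimately show ?thesis
      using cop1_after_robber by auto
  next
    case other
    then show ?thesis
      using payoff_chase[OF s mN] m N_gt_2
        payoff_cop_bounds[OF frozen_no_capture[OF s frozen_0[OF s, of \<rho>]] g, of m]
      by (auto simp: jump_reward_def)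
  qed
qed

lemma chase_robber_deviation:
  assumes s: "(xs, n0) \<in> S_nc V N" and g: "0 < \<gamma>" "\<gamma> < 1" and \<tau>: "gstrategy V E N N \<tau>"
  shows "payoff N \<gamma> 0 N ((\<lambda>_. as_general (chase N))(N := \<tau>)) (xs, n0)
    \<le> payoff N \<gamma> 0 N (\<lambda>_. as_general (chase N)) (xs, n0)"
proof (cases "n0 = N")
  case True
  let ?\<rho> = "(\<lambda>_. as_general (chase N))(N := \<tau>)"
  have NN: "N \<in> {1..N}"
    using N_gt_2 by simp
  have sN: "(xs, N) \<in> S_nc V N"
    using s True by simp
  have "payoff N \<gamma> 0 N ?\<rho> (xs, N) \<in> {- (\<gamma> * \<gamma>), - \<gamma>}"
    using payoff_robber_first[where \<rho> = ?\<rho> and \<gamma> = \<gamma>, OF sN _ _ NN] \<tau> N_gt_2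
    by (simp add: jump_reward_def power2_eq_square)
  moreover have "\<gamma> * \<gamma> \<le> \<gamma>"
    using g by (simp add: mult_le_cancel_left1)
  moreover have "payoff N \<gamma> 0 N (\<lambda>_. as_general (chase N)) (xs, N) = - (\<gamma> * \<gamma>)"
    using payoff_chase[OF sN NN] N_gt_2 by (simp add: jump_reward_def power2_eq_square)
  ultimately show ?thesis
    using True by auto
next
  case False
  then show ?thesis
    using payoff_chasing_first[OF s _ _ _, of _ N \<gamma>] S_nc_D(2)[OF s] N_gt_2 by simp
qed

lemma chase_robber_opponents:
  assumes s: "(xs, n0) \<in> S_nc V N" and g: "0 < \<gamma>" "\<gamma> < 1"
    and chase: "\<rho> N = as_general (chase N)"
  shows "payoff N \<gamma> 0 N (\<lambda>_. as_general (chase N)) (xs, n0) \<le> payoff N \<gamma> 0 N \<rho> (xs, n0)"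
proof -
  have fr: "frozen N \<rho> (xs, n0) xs 0 n0"
    by (rule frozen_0[OF s])
  have NN: "N \<in> {1..N}"
    using N_gt_2 by simp
  show ?thesis
  proof (cases "n0 = N")
    case True
    then have fr1: "frozen N \<rho> (xs, n0) xs 1 1"
      using frozen_chasing_robber[of \<rho> "(xs, n0)" xs 0] fr chase by simp
    then show ?thesis
      using payoff_chase[OF s NN] payoff_robber_bounds[OF frozen_no_capture[OF s fr1] g] True N_gt_2
      by (simp add: jump_reward_def numeral_2_eq_2)
  next
    case False
    then show ?thesis
      using payoff_chase[OF s NN] payoff_robber_bounds[OF frozen_no_capture[OF s fr] g] N_gt_2
      by (simp add: jump_reward_def)
  qed
qed

lemma opt_pair_chase:
  assumes m: "m \<in> {1..N}" and g: "0 < \<gamma>" "\<gamma> < 1" and \<gamma>_le: "m = 1 \<longrightarrow> \<gamma> \<le> 1 / (real N - 1)"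
  shows "opt_pair V E N \<gamma> 0 m (\<lambda>_. chase N)"
proof (rule opt_pairI)
  fix xs n0 \<tau>
  assume s: "(xs, n0) \<in> S_nc V N" and \<tau>: "gstrategy V E N m \<tau>"
  show "payoff N \<gamma> 0 m ((\<lambda>_. as_general (chase N))(m := \<tau>)) (xs, n0)
    \<le> payoff N \<gamma> 0 m (\<lambda>_. as_general (chase N)) (xs, n0)"
  proof (cases "m = N")
    case True
    then show ?thesis
      using chase_robber_deviation[OF s g] \<tau> by simp
  next
    case False
    then show ?thesis
      using chase_cop_deviation[OF s _ _ g] m by simp
  qed
next
  fix xs n0 \<rho>
  assume s: "(xs, n0) \<in> S_nc V N" and \<rho>: "\<forall>n\<in>{1..N} - {m}. gstrategy V E N n (\<rho> n)"
  show "payoff N \<gamma> 0 m (\<lambda>_. as_general (chase N)) (xs, n0)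
    \<le> payoff N \<gamma> 0 m (\<rho>(m := as_general (chase N))) (xs, n0)"
  proof (cases "m = N")
    case True
    then show ?thesis
      using chase_robber_opponents[OF s g] by simp
  next
    case False
    have robber: "gstrategy V E N N ((\<rho>(m := as_general (chase N))) N)"
      using \<rho> False N_gt_2 by simp
    have "1 \<le> m" "m < N"
      using m False by auto
    from chase_cop_opponents[of xs n0 m \<gamma> "\<rho>(m := as_general (chase N))", OF s this g \<gamma>_le _ robber]
    show ?thesis
      by simp
  qed
qed (rule pstrategy_chase)

lemma payoff_surrender_first:
  assumes s: "(xs, n0) \<in> S_nc V N" and first: "\<rho> n0 = as_general (surrender N n0)"
    and m: "m \<in> {1..N}"
  shows "payoff N \<gamma> 0 m \<rho> (xs, n0) = jump_reward N m n0 * \<gamma>"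
proof (cases "n0 = N")
  case True
  have "xs ! 0 \<in> V" "xs ! 0 \<noteq> xs ! (N - 1)"
    using S_nc_D(3)[OF s, of 0] S_nc_D(4)[OF s, of 1] N_gt_2 by auto
  then show ?thesis
    using payoff_jump[OF s frozen_0[OF s, of \<rho>] _ _ m] first True
    by (simp add: surrender_def pos_def as_general_def)
next
  case False
  then show ?thesis
    using payoff_chasing_first[OF s _ _ m] first S_nc_D(2)[OF s] by (simp add: surrender_def)
qed

lemma surrender_cop1_deviation:
  assumes s: "(xs, n0) \<in> S_nc V N" and g: "0 < \<gamma>" "\<gamma> < 1"
  shows "payoff N \<gamma> 0 1 ((\<lambda>n. as_general (surrender N n))(1 := \<tau>)) (xs, n0)
    \<le> payoff N \<gamma> 0 1 (\<lambda>n. as_general (surrender N n)) (xs, n0)"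
proof -
  have one: "1 \<in> {1..N}"
    using N_gt_2 by simp
  have surrender_payoff:
    "payoff N \<gamma> 0 1 (\<lambda>n. as_general (surrender N n)) (xs, n0) = jump_reward N 1 n0 * \<gamma>"
    by (rule payoff_surrender_first[OF s _ one]) simp
  show ?thesis
  proof (cases "n0 = 1")
    case True
    then show ?thesis
      using surrender_payoff N_gt_2 payoff_cop_bounds[OF frozen_no_capture[OF s frozen_0[OF s]] g]
      by (simp add: jump_reward_def)
  next
    case False
    then show ?thesis
      using surrender_payoff payoff_surrender_first[OF s _ one] by simp
  qed
qed

lemma surrender_cop1_opponents:
  assumes s: "(xs, n0) \<in> S_nc V N" and g: "0 < \<gamma>" "\<gamma> < 1" and \<gamma>_ge: "1 / (real N - 1) \<le> \<gamma>"
    and cop1: "\<rho> 1 = as_general (surrender N 1)" and robber: "gstrategy V E N N (\<rho> N)"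
  shows "payoff N \<gamma> 0 1 (\<lambda>n. as_general (surrender N n)) (xs, n0) \<le> payoff N \<gamma> 0 1 \<rho> (xs, n0)"
proof -
  have one: "1 \<in> {1..N}"
    using N_gt_2 by simp
  have surrender_payoff:
    "payoff N \<gamma> 0 1 (\<lambda>n. as_general (surrender N n)) (xs, n0) = jump_reward N 1 n0 * \<gamma>"
    by (rule payoff_surrender_first[OF s _ one]) simp
  consider (own_turn) "n0 = 1" | (robber_turn) "n0 = N" | (other) "n0 \<noteq> 1" "n0 \<noteq> N"
    by blast
  then show ?thesis
  proof cases
    case own_turn
    then show ?thesis
      using surrender_payoff payoff_surrender_first[OF s _ one] cop1 by simp
  next
    case robber_turn
    then have sN: "(xs, N) \<in> S_nc V N"
      using s by simp
    have "\<rho> 1 = as_general (chase N)"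
      using cop1 N_gt_2 by (simp add: surrender_def)
    then have "payoff N \<gamma> 0 1 \<rho> (xs, N) \<in> {\<gamma> * \<gamma>, \<gamma> * (1 / (real N - 1))}"
      using payoff_robber_first[where \<rho> = \<rho> and \<gamma> = \<gamma>, OF sN _ robber one] N_gt_2
      by (simp add: jump_reward_def power2_eq_square)
    moreover have "\<gamma> * (1 / (real N - 1)) \<le> \<gamma> * \<gamma>"
      using \<gamma>_ge g by (intro mult_left_mono) auto
    ultimately show ?thesis
      using surrender_payoff robber_turn N_gt_2 by (auto simp: jump_reward_def)
  next
    case other
    then show ?thesis
      using surrender_payoff N_gt_2
        payoff_cop_bounds[OF frozen_no_capture[OF s frozen_0[OF s, of \<rho>]] g, of 1]
      by (simp add: jump_reward_def)
  qed
qed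

lemma opt_pair_surrender:
  assumes g: "0 < \<gamma>" "\<gamma> < 1" and \<gamma>_ge: "1 / (real N - 1) \<le> \<gamma>"
  shows "opt_pair V E N \<gamma> 0 1 (surrender N)"
proof (rule opt_pairI)
  fix xs n0 \<tau>
  assume "(xs, n0) \<in> S_nc V N"
  then show "payoff N \<gamma> 0 1 ((\<lambda>n. as_general (surrender N n))(1 := \<tau>)) (xs, n0)
    \<le> payoff N \<gamma> 0 1 (\<lambda>n. as_general (surrender N n)) (xs, n0)"
    by (rule surrender_cop1_deviation[OF _ g])
next
  fix xs n0 \<rho>
  assume s: "(xs, n0) \<in> S_nc V N" and \<rho>: "\<forall>n\<in>{1..N} - {1}. gstrategy V E N n (\<rho> n)"
  have "gstrategy V E N N ((\<rho>(1 := as_general (surrender N 1))) N)"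
    using \<rho> N_gt_2 by simp
  from surrender_cop1_opponents[of xs n0 \<gamma> "\<rho>(1 := as_general (surrender N 1))", OF s g \<gamma>_ge _ this]
  show "payoff N \<gamma> 0 1 (\<lambda>n. as_general (surrender N n)) (xs, n0)
    \<le> payoff N \<gamma> 0 1 (\<rho>(1 := as_general (surrender N 1))) (xs, n0)"
    by simp
qed (rule pstrategy_surrender)

lemma payoff_cop1_waits:
  assumes s: "(xs, n0) \<in> S_nc V N" and N: "3 < N"
    and \<rho>: "\<And>n. n \<noteq> 3 \<Longrightarrow> \<rho> n = as_general (cop1_waits N n)"
    and n0: "n0 \<noteq> 3"
  shows "payoff N \<gamma> 0 3 \<rho> (xs, n0) = 0"
proof -
  have three: "3 \<in> {1..N}"
    using N by simp
  have fr: "frozen N \<rho> (xs, n0) xs 0 n0"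
    by (rule frozen_0[OF s])
  have after_cop1: "payoff N \<gamma> 0 3 \<rho> (xs, n0) = 0" if fr1: "frozen N \<rho> (xs, n0) xs t 1" for t
  proof -
    have "frozen N \<rho> (xs, n0) xs (Suc t) 2"
      using frozen_Suc[OF fr1] frozen_play[OF fr1] \<rho>[of 1] N
      by (simp add: cop1_waits_def pos_def next_tok_def numeral_2_eq_2)
    then show ?thesis
      using payoff_chasing_cop[OF s _ _ _ three] \<rho>[of 2] N
      by (simp add: cop1_waits_def jump_reward_def)
  qed
  show ?thesis
  proof (cases "n0 = N \<or> n0 = 1")
    case True
    then obtain t where "frozen N \<rho> (xs, n0) xs t 1"
      using frozen_chasing_robber[of \<rho> "(xs, n0)" xs 0] fr \<rho>[of N] N
      by (auto simp: cop1_waits_def)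
    then show ?thesis
      by (rule after_cop1)
  next
    case False
    then show ?thesis
      using payoff_chasing_first[OF s _ _ three] \<rho>[OF n0] n0 S_nc_D(2)[OF s] N
      by (simp add: cop1_waits_def jump_reward_def)
  qed
qed

text \<open>Cop 1 waiting lets cop 2 capture first whenever cop 3 is not already to move, so the
  opponents hold cop 3 down to what it can grab on its own turn.\<close>
lemma opt_pair_cop1_waits:
  assumes N: "3 < N" and g: "0 < \<gamma>" "\<gamma> < 1"
  shows "opt_pair V E N \<gamma> 0 3 (cop1_waits N)"
proof (rule opt_pairI)
  have three: "3 \<in> {1..N}"
    using N by simp
  fix xs n0 and \<tau> :: "'v state list \<Rightarrow> 'v"
  assume s: "(xs, n0) \<in> S_nc V N"
  let ?\<rho> = "(\<lambda>n. as_general (cop1_waits N n))(3 := \<tau>)"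
  show "payoff N \<gamma> 0 3 ?\<rho> (xs, n0) \<le> payoff N \<gamma> 0 3 (\<lambda>n. as_general (cop1_waits N n)) (xs, n0)"
  proof (cases "n0 = 3")
    case True
    then show ?thesis
      using payoff_chasing_first[OF s _ _ three, of "\<lambda>n. as_general (cop1_waits N n)"] N
        payoff_cop_bounds[OF frozen_no_capture[OF s frozen_0[OF s, of ?\<rho>]] g, of 3]
      by (simp add: cop1_waits_def jump_reward_def)
  next
    case False
    then show ?thesis
      using payoff_cop1_waits[OF s N, of ?\<rho>] payoff_cop1_waits[OF s N] by simp
  qed
next
  have three: "3 \<in> {1..N}"
    using N by simp
  fix xs n0 and \<rho> :: "nat \<Rightarrow> 'v state list \<Rightarrow> 'v"
  assume s: "(xs, n0) \<in> S_nc V N"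
  let ?\<rho> = "\<rho>(3 := as_general (cop1_waits N 3))"
  show "payoff N \<gamma> 0 3 (\<lambda>n. as_general (cop1_waits N n)) (xs, n0) \<le> payoff N \<gamma> 0 3 ?\<rho> (xs, n0)"
  proof (cases "n0 = 3")
    case True
    then show ?thesis
      using payoff_chasing_first[OF s _ _ three, of ?\<rho>]
        payoff_chasing_first[OF s _ _ three, of "\<lambda>n. as_general (cop1_waits N n)"] N
      by (simp add: cop1_waits_def)
  next
    case False
    then show ?thesis
      using payoff_cop1_waits[OF s N] N
        payoff_cop_bounds[OF frozen_no_capture[OF s frozen_0[OF s, of ?\<rho>]] g, of 3]
      by simp
  qed
qed (rule pstrategy_cop1_waits)

section \<open>Constraints on optimal strategies\<close>

lemma pstrategy_cop_stays_or_captures: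
  assumes "pstrategy V E N n \<sigma>" "(xs, n) \<in> S_nc V N" "n < N" "\<sigma> (xs, n) \<noteq> xs ! (N - 1)"
  shows "\<sigma> (xs, n) = xs ! (n - 1)"
proof -
  have "n \<in> {1..N}"
    using S_nc_D(2)[OF assms(2)] .
  then have "xs ! (n - 1) \<in> V" "xs ! (N - 1) \<in> V" "xs ! (n - 1) \<noteq> xs ! (N - 1)"
    using S_nc_D(3,4)[OF assms(2)] assms(3) by auto
  moreover have "\<sigma> (xs, n) \<in> V"
    using assms(1,2) unfolding pstrategy_def nbhd_def by auto
  ultimately show ?thesis
    using assms(4) other_vertex_unique[of "\<sigma> (xs, n)" "xs ! (n - 1)" "xs ! (N - 1)"] by blast
qed

lemma CR_optimal_cop_captures:
  assumes opt: "opt_pair V E N \<gamma> 0 N \<sigma>" and g: "0 < \<gamma>" "\<gamma> < 1"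
    and s: "(xs, n) \<in> S_nc V N" and n: "1 \<le> n" "n < N"
  shows "\<sigma> n (xs, n) = xs ! (N - 1)"
proof (rule ccontr)
  let ?\<sigma> = "\<lambda>k. as_general (\<sigma> k)"
  let ?\<rho> = "?\<sigma>(n := as_general (chase N))"
  assume "\<sigma> n (xs, n) \<noteq> xs ! (N - 1)"
  then have stay: "\<sigma> n (xs, n) = xs ! (n - 1)"
    using pstrategy_cop_stays_or_captures opt_pair_pstrategy[OF opt s] s n by simp
  have NN: "N \<in> {1..N}"
    using N_gt_2 by simp
  have "\<forall>k\<in>{1..N} - {N}. gstrategy V E N k (?\<rho> k)"
    using opt_pair_pstrategy[OF opt s] pstrategy_chase by (simp add: gstrategy_as_general)
  moreover have "?\<rho>(N := ?\<sigma> N) = ?\<rho>"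
    using n by (intro fun_upd_idem) simp
  ultimately have "payoff N \<gamma> 0 N ?\<sigma> (xs, n) \<le> payoff N \<gamma> 0 N ?\<rho> (xs, n)"
    using opt_pair_opponents[OF opt s] by metis
  also have "\<dots> = - \<gamma>"
    using payoff_chasing_first[OF s n(2) _ NN] by (simp add: jump_reward_def)
  finally have "payoff N \<gamma> 0 N ?\<sigma> (xs, n) \<le> - \<gamma>" .
  moreover have fr1: "frozen N ?\<sigma> (xs, n) xs 1 (next_tok N n)"
    using frozen_Suc[OF frozen_0[OF s]] stay by (simp add: as_general_def)
  then have "- (\<gamma> ^ 2) \<le> payoff N \<gamma> 0 N ?\<sigma> (xs, n)"
    using payoff_robber_bounds[OF frozen_no_capture[OF s fr1] g] N_gt_2 by (simp add: numeral_2_eq_2)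
  moreover have "\<gamma> ^ 2 < \<gamma>"
    using g by (simp add: power2_eq_square)
  ultimately show False
    by simp
qed

lemma CR_optimal_robber_stays:
  assumes opt: "opt_pair V E N \<gamma> 0 N \<sigma>" and g: "0 < \<gamma>" "\<gamma> < 1" and s: "(xs, N) \<in> S_nc V N"
  shows "\<sigma> N (xs, N) = xs ! (N - 1)"
proof (rule ccontr)
  let ?\<sigma> = "\<lambda>k. as_general (\<sigma> k)"
  let ?\<rho> = "?\<sigma>(N := as_general (chase N))"
  have NN: "N \<in> {1..N}"
    using N_gt_2 by simp
  assume jump: "\<sigma> N (xs, N) \<noteq> xs ! (N - 1)"
  have "\<sigma> N (xs, N) \<in> V"
    using opt_pair_pstrategy[OF opt s NN] s unfolding pstrategy_def nbhd_def by auto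
  then have "payoff N \<gamma> 0 N ?\<sigma> (xs, N) = - \<gamma>"
    using payoff_jump[OF s frozen_0[OF s], of ?\<sigma>] jump NN by (simp add: jump_reward_def as_general_def)
  moreover have fr1: "frozen N ?\<rho> (xs, N) xs 1 1"
    using frozen_chasing_robber[OF frozen_0[OF s]] by simp
  then have "- (\<gamma> ^ 2) \<le> payoff N \<gamma> 0 N ?\<rho> (xs, N)"
    using payoff_robber_bounds[OF frozen_no_capture[OF s fr1] g] N_gt_2 by (simp add: numeral_2_eq_2)
  moreover have "payoff N \<gamma> 0 N ?\<rho> (xs, N) \<le> payoff N \<gamma> 0 N ?\<sigma> (xs, N)"
    by (rule opt_pair_player[OF opt s gstrategy_as_general[OF pstrategy_chase]])
  moreover have "\<gamma> ^ 2 < \<gamma>"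
    using g by (simp add: power2_eq_square)
  ultimately show False
    by simp
qed

lemma cop1_optimal_robber_surrenders:
  assumes opt: "opt_pair V E N \<gamma> 0 1 \<sigma>" and g: "0 < \<gamma>" "\<gamma> < 1" and \<gamma>_gt: "1 / (real N - 1) < \<gamma>"
    and s: "(xs, N) \<in> S_nc V N"
  shows "\<sigma> N (xs, N) \<noteq> xs ! (N - 1)"
proof
  let ?\<sigma> = "\<lambda>k. as_general (\<sigma> k)"
  have one: "1 \<in> {1..N}"
    using N_gt_2 by simp
  assume stay: "\<sigma> N (xs, N) = xs ! (N - 1)"
  have "\<forall>k\<in>{1..N} - {1}. gstrategy V E N k ((?\<sigma>(N := as_general (surrender N N))) k)"
    using opt_pair_pstrategy[OF opt s] pstrategy_surrender by (simp add: gstrategy_as_general)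
  then have "payoff N \<gamma> 0 1 ?\<sigma> (xs, N)
      \<le> payoff N \<gamma> 0 1 ((?\<sigma>(N := as_general (surrender N N)))(1 := ?\<sigma> 1)) (xs, N)"
    by (rule opt_pair_opponents[OF opt s])
  also have "\<dots> = \<gamma> * (1 / (real N - 1))"
    using payoff_surrender_first[OF s _ one] N_gt_2 by (simp add: jump_reward_def)
  finally have "payoff N \<gamma> 0 1 ?\<sigma> (xs, N) \<le> \<gamma> * (1 / (real N - 1))" .
  moreover have "frozen N (?\<sigma>(1 := as_general (chase N))) (xs, N) xs 1 1"
    using frozen_Suc[OF frozen_0[OF s]] stay N_gt_2 by (simp add: next_tok_def as_general_def)
  then have "payoff N \<gamma> 0 1 (?\<sigma>(1 := as_general (chase N))) (xs, N) = \<gamma> * \<gamma>"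
    using payoff_chasing_cop[OF s _ _ _ one] N_gt_2 by (simp add: jump_reward_def)
  moreover have "payoff N \<gamma> 0 1 (?\<sigma>(1 := as_general (chase N))) (xs, N) \<le> payoff N \<gamma> 0 1 ?\<sigma> (xs, N)"
    by (rule opt_pair_player[OF opt s gstrategy_as_general[OF pstrategy_chase]])
  ultimately have "\<gamma> * \<gamma> \<le> \<gamma> * (1 / (real N - 1))"
    by simp
  moreover have "\<gamma> * (1 / (real N - 1)) < \<gamma> * \<gamma>"
    using \<gamma>_gt g by (intro mult_strict_left_mono)
  ultimately show False
    by simp
qed

end

section \<open>Trigger strategies profiles\<close>

lemma step_rel_pass:
  assumes s: "(xs, n) \<in> S_nc V N"
  shows "step_rel V E N (xs, n) (xs, next_tok N n)"
  unfolding step_rel_def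
proof (intro conjI bexI)
  show "(xs, next_tok N n) = move N (xs, n) (pos (xs, n) (snd (xs, n)))"
    by (simp add: move_def pos_def)
  have "n - 1 < N"
    using S_nc_D(2)[OF s] by auto
  then show "pos (xs, n) (snd (xs, n)) \<in> nbhd V E (pos (xs, n) (snd (xs, n)))"
    using S_nc_D(3)[OF s] unfolding nbhd_def by (simp add: pos_def)
qed (fact s)

lemma reachable_robber_turn:
  assumes s: "(xs, n0) \<in> S_nc V N"
  shows "reachable V E N (xs, n0) (xs, N)"
proof -
  have "reachable V E N (xs, n0) (xs, j)" if "n0 \<le> j" "j \<le> N" for j
    using that(1)
  proof (induction j rule: dec_induct)
    case (step k)
    then have "(xs, k) \<in> S_nc V N"
      using S_nc_turn[OF s] S_nc_D(2)[OF s] that(2) by simp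
    from step_rel_pass[OF this] have "step_rel V E N (xs, k) (xs, Suc k)"
      using \<open>k < j\<close> that(2) by (simp add: next_tok_def)
    then show ?case
      using step.IH unfolding reachable_def by (rule rtranclp.rtrancl_into_rtrancl[rotated])
  qed (simp add: reachable_def)
  then show ?thesis
    using S_nc_D(2)[OF s] by simp
qed

lemma reachable_cop1_turn:
  assumes s: "(xs, n0) \<in> S_nc V N"
  shows "reachable V E N (xs, n0) (xs, 1)"
proof -
  have "(xs, N) \<in> S_nc V N"
    using S_nc_turn[OF s] S_nc_D(2)[OF s] by simp
  from step_rel_pass[OF this] have "step_rel V E N (xs, N) (xs, 1)"
    by (simp add: next_tok_def)
  then show ?thesis
    using reachable_robber_turn[OF s] unfolding reachable_def
    by (rule rtranclp.rtrancl_into_rtrancl[rotated])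
qed

context two_vertex_game
begin

lemma nonpositional_trigger_choice:
  assumes N: "3 < N" and s0: "s0 \<in> S_nc V N" and g: "0 < \<gamma>" "\<gamma> < 1"
  shows "\<exists>\<phi>. trigger_choice V E N \<gamma> 0 \<phi> \<and> \<not> positional_trigger V E N \<gamma> 0 s0 \<phi>"
proof -
  define \<phi> :: "nat \<Rightarrow> nat \<Rightarrow> 'v state \<Rightarrow> 'v" where "\<phi> n m =
    (if m = 3 then cop1_waits N n
     else if m = 1 \<and> 1 / (real N - 1) < \<gamma> then surrender N n else chase N)" for n m
  have "opt_pair V E N \<gamma> 0 m (\<lambda>n. \<phi> n m)" if "m \<in> {1..N}" for m
    using opt_pair_cop1_waits[OF N g] opt_pair_surrender[OF g] opt_pair_chase[OF that g]
    unfolding \<phi>_def by (cases "m = 3"; cases "m = 1 \<and> 1 / (real N - 1) < \<gamma>") (auto simp: fun_eq_iff)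
  then have "trigger_choice V E N \<gamma> 0 \<phi>"
    unfolding trigger_choice_def by blast
  moreover have "\<not> positional_trigger V E N \<gamma> 0 s0 \<phi>"
  proof
    obtain xs n0 where s0_def: "s0 = (xs, n0)"
      by fastforce
    have s: "(xs, n0) \<in> S_nc V N"
      using s0 unfolding s0_def .
    have s1: "(xs, 1) \<in> S_nc V N"
      using S_nc_turn[OF s, of 1] N by simp
    assume "positional_trigger V E N \<gamma> 0 s0 \<phi>"
    then obtain \<sigma>h where "\<sigma>h \<in> CR_opt V E N \<gamma> 0 1" and \<sigma>h: "\<phi> 1 3 (xs, 1) = \<sigma>h (xs, 1)"
      using reachable_cop1_turn[OF s] s1 N unfolding positional_trigger_def s0_def by fastforce
    then obtain \<sigma> where "opt_pair V E N \<gamma> 0 N \<sigma>" "\<sigma>h = \<sigma> 1"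
      unfolding CR_opt_def by blast
    then have "\<phi> 1 3 (xs, 1) = xs ! (N - 1)"
      using CR_optimal_cop_captures[OF _ g s1] \<sigma>h N by simp
    then show False
      using S_nc_D(4)[OF s, of 1] N by (simp add: \<phi>_def cop1_waits_def pos_def)
  qed
  ultimately show ?thesis
    by blast
qed

lemma positional_trigger_discount_le:
  assumes s0: "s0 \<in> S_nc V N" and g: "0 < \<gamma>" "\<gamma> < 1"
    and "trigger_choice V E N \<gamma> 0 \<phi>" "positional_trigger V E N \<gamma> 0 s0 \<phi>"
  shows "\<gamma> \<le> 1 / (real N - 1)"
proof (rule ccontr)
  assume "\<not> \<gamma> \<le> 1 / (real N - 1)"
  obtain xs n0 where s0_def: "s0 = (xs, n0)"
    by fastforce
  have s: "(xs, n0) \<in> S_nc V N"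
    using s0 unfolding s0_def .
  have sN: "(xs, N) \<in> S_nc V N"
    using S_nc_turn[OF s, of N] N_gt_2 by simp
  have "opt_pair V E N \<gamma> 0 1 (\<lambda>n. \<phi> n 1)"
    using assms(4) N_gt_2 unfolding trigger_choice_def by simp
  then have "\<phi> N 1 (xs, N) \<noteq> xs ! (N - 1)"
    using cop1_optimal_robber_surrenders[OF _ g _ sN] \<open>\<not> \<gamma> \<le> 1 / (real N - 1)\<close> by simp
  moreover obtain \<sigma>h where "\<sigma>h \<in> CR_opt V E N \<gamma> 0 N" and "\<phi> N 1 (xs, N) = \<sigma>h (xs, N)"
    using assms(5) reachable_robber_turn[OF s] sN N_gt_2
    unfolding positional_trigger_def s0_def by fastforce
  moreover obtain \<sigma> where "opt_pair V E N \<gamma> 0 N \<sigma>" "\<sigma>h = \<sigma> N"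
    using \<open>\<sigma>h \<in> CR_opt V E N \<gamma> 0 N\<close> unfolding CR_opt_def by blast
  ultimately show False
    using CR_optimal_robber_stays[OF _ g sN] by simp
qed

lemma positional_trigger_chase:
  assumes g: "0 < \<gamma>" "\<gamma> < 1" and \<gamma>_le: "\<gamma> \<le> 1 / (real N - 1)"
  shows "trigger_choice V E N \<gamma> 0 (\<lambda>n m. chase N) \<and> positional_trigger V E N \<gamma> 0 s0 (\<lambda>n m. chase N)"
proof
  show "trigger_choice V E N \<gamma> 0 (\<lambda>n m. chase N)"
    unfolding trigger_choice_def using opt_pair_chase[OF _ g] \<gamma>_le by simp
  have "chase N \<in> CR_opt V E N \<gamma> 0 n" for n
    using opt_pair_chase[OF _ g, of N] N_gt_2 unfolding CR_opt_def by auto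
  then show "positional_trigger V E N \<gamma> 0 s0 (\<lambda>n m. chase N)"
    unfolding positional_trigger_def by blast
qed

end

lemma two_vertex_game_of_graph:
  assumes "simple_graph V E" "graph_connected V E" "card V = 2" "2 < N"
  obtains a b where "two_vertex_game V E N a b"
proof -
  obtain a b where V: "V = {a, b}" "a \<noteq> b"
    using assms(3) card_2_iff by metis
  then have "E\<^sup>*\<^sup>* a b"
    using assms(2) unfolding graph_connected_def by simp
  then obtain c where "E a c"
    using V(2) by (metis converse_rtranclpE)
  moreover have "c \<in> V" "c \<noteq> a"
    using assms(1) \<open>E a c\<close> unfolding simple_graph_def by auto
  ultimately have "E a b" "E b a"
    using V assms(1) unfolding simple_graph_def by auto
  then show ?thesis
    using that V assms(4) unfolding two_vertex_game_def by blast
qed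

theorem mainTheorem3:
  fixes V :: "'v set" and E :: "'v \<Rightarrow> 'v \<Rightarrow> bool" and N :: nat and s0 :: "'v state"
  assumes "simple_graph V E" and "graph_connected V E" and "card V = 2"
    and "N > 3" and "s0 \<in> S_nc V N"
  shows "(\<forall>\<gamma>::real. 0 < \<gamma> \<and> \<gamma> < 1 \<longrightarrow>
            (\<exists>\<phi>. trigger_choice V E N \<gamma> 0 \<phi> \<and> \<not> positional_trigger V E N \<gamma> 0 s0 \<phi>))
       \<and> (\<forall>\<gamma>::real. 0 < \<gamma> \<and> \<gamma> < 1 \<longrightarrow>
            ((\<exists>\<phi>. trigger_choice V E N \<gamma> 0 \<phi> \<and> positional_trigger V E N \<gamma> 0 s0 \<phi>)
              \<longleftrightarrow> \<gamma> \<le> 1 / (real N - 1)))"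
proof -
  have "2 < N"
    using assms(4) by simp
  then obtain a b where "two_vertex_game V E N a b"
    by (rule two_vertex_game_of_graph[OF assms(1-3)])
  then interpret two_vertex_game V E N a b .
  show ?thesis
    using nonpositional_trigger_choice[OF assms(4,5)] positional_trigger_discount_le[OF assms(5)]
      positional_trigger_chase by blast
qed

end
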